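(* For every oriented classical link $L$ with $\mu$ components, $Q_A^{red}(L)=\phi_\tau^{-1}\big(\{(t_1-1)\otimes1,\dots,(t_\mu-1)\otimes1\}\big)$.
   Context: Let $L=K_1\cup\dots\cup K_\mu$ be an oriented classical link with diagram $D$. $A(D)$ is the set of arcs of $D$ and $C(D)$ the set of crossings; $\kappa_D:A(D)\to\{1,\dots,\mu\}$ sends an arc to the index of its component. At a crossing $c$, $a_1$ is the overpassing arc, $a_2$ the underpassing arc on the right of $a_1$ (with respect to the orientation of $a_1$), $a_3$ the underpassing arc on the left of $a_1$. $\Lambda_\mu=\mathbb Z[t_1^{\pm1},\dots,t_\mu^{\pm1}]$, $\Lambda=\mathbb Z[t^{\pm1}]$, $\tau:\Lambda_\mu\to\Lambda$ the ring homomorphism with $\tau(t_i)=t$, making $\Lambda$ a $\Lambda_\mu$-module; $I_\mu$ is the augmentation ideal of $\Lambda_\mu$. $\rho_D:\Lambda_\mu^{C(D)}\to\Lambda_\mu^{A(D)}$ is the $\Lambda_\mu$-linear map with $\rho_D(c)=(1-t_{\kappa_D(a_2)})a_1+t_{\kappa_D(a_1)}a_2-a_3$; $M_A(L)=\operatorname{coker}\rho_D$ with quotient map $\gamma_D$; $\phi_L:M_A(L)\to I_\mu$ is the $\Lambda_\mu$-linear map with $\phi_L(\gamma_D(a))=t_{\kappa_D(a)}-1$. $M_A^{red}(L)=M_A(L)\otimes_{\Lambda_\mu}\Lambda$ and $\phi_\tau=\phi_L\otimes\mathrm{id}_\Lambda:M_A^{red}(L)\to I_\mu\otimes_{\Lambda_\mu}\Lambda$.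 A quandle is a set with a binary operation $\triangleright$ such that $x\triangleright x=x$, each translation $\beta_y(x)=x\triangleright y$ is a bijection (write $x\triangleright^{-1}y=\beta_y^{-1}(x)$), and $(x\triangleright y)\triangleright z=(x\triangleright z)\triangleright(y\triangleright z)$; the subquandle generated by a subset is the smallest subset containing it closed under $\triangleright,\triangleright^{-1}$. On $M_A(L)$ define $x\triangleright y=(\phi_L(y)+1)x-\phi_L(x)y$; this is a quandle operation on $U(L)=\{x:\phi_L(x)+1\text{ a unit of }\Lambda_\mu\}$, and $Q_A(L)$ is the subquandle of $U(L)$ generated by $\gamma_D(A(D))$. $Q_A^{red}(L)=\{x\otimes1:x\in Q_A(L)\}\subset M_A^{red}(L)$ with quandle operation $(x\otimes1)\triangleright(y\otimes1)=(x\triangleright y)\otimes 1$. *)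

theory Defs
  imports "HOL-Library.Poly_Mapping" "HOL-Library.Function_Algebras"
begin

section \<open>Combinatorial oriented link diagrams\<close>

text \<open>A diagram consists of crossings (type 'c), edges (type 'e; the oriented
segments of the diagram between consecutive crossings), for each crossing the
incoming/outgoing over- and under-edges, a sign (True = positive crossing),
a number of crossingless circle components, and a labelling of the components
by the finite type 'm (so mu = CARD('m)).\<close>

datatype slot = SIO | SOO | SIU | SOU

record ('c, 'e, 'm) diagram =
  crs :: "'c set"
  edg :: "'e set"
  inov :: "'c \<Rightarrow> 'e"
  outov :: "'c \<Rightarrow> 'e"
  inun :: "'c \<Rightarrow> 'e"
  outun :: "'c \<Rightarrow> 'e"
  pos :: "'c \<Rightarrow> bool"
  nloops :: nat
  labE :: "'e \<Rightarrow> 'm"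
  labL :: "nat \<Rightarrow> 'm"

definition edge_at :: "('c, 'e, 'm) diagram \<Rightarrow> 'c \<times> slot \<Rightarrow> 'e" where
  "edge_at D d = (case snd d of SIO \<Rightarrow> inov D (fst d) | SOO \<Rightarrow> outov D (fst d)
     | SIU \<Rightarrow> inun D (fst d) | SOU \<Rightarrow> outun D (fst d))"

definition is_out :: "slot \<Rightarrow> bool" where
  "is_out s \<longleftrightarrow> s = SOO \<or> s = SOU"

definition darts :: "('c, 'e, 'm) diagram \<Rightarrow> ('c \<times> slot) set" where
  "darts D = crs D \<times> UNIV"

text \<open>Counterclockwise cyclic order of the four half-edges at a crossing.
Positive crossing: over strand SW to NE, under strand SE to NW.
Negative crossing: over strand SE to NW, under strand SW to NE.\<close>

definition rot :: "('c, 'e, 'm) diagram \<Rightarrow> 'c \<times> slot \<Rightarrow> 'c \<times> slot" where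
  "rot D d = (fst d, (if pos D (fst d) then
       (case snd d of SOO \<Rightarrow> SOU | SOU \<Rightarrow> SIO | SIO \<Rightarrow> SIU | SIU \<Rightarrow> SOO)
     else (case snd d of SOU \<Rightarrow> SOO | SOO \<Rightarrow> SIU | SIU \<Rightarrow> SIO | SIO \<Rightarrow> SOU)))"

definition opp :: "('c, 'e, 'm) diagram \<Rightarrow> 'c \<times> slot \<Rightarrow> 'c \<times> slot" where
  "opp D d = (THE d'. d' \<in> darts D \<and> d' \<noteq> d \<and> edge_at D d' = edge_at D d)"

definition face_perm :: "('c, 'e, 'm) diagram \<Rightarrow> 'c \<times> slot \<Rightarrow> 'c \<times> slot" where
  "face_perm D d = rot D (opp D d)"

definition faces :: "('c, 'e, 'm) diagram \<Rightarrow> ('c \<times> slot) set set" where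
  "faces D = darts D // {(d, d'). d \<in> darts D \<and> (\<exists>n. (face_perm D ^^ n) d = d')}"

definition adj :: "('c, 'e, 'm) diagram \<Rightarrow> ('c \<times> 'c) set" where
  "adj D = {(c, c'). c \<in> crs D \<and> c' \<in> crs D \<and>
             (\<exists>s s'. edge_at D (c, s) = edge_at D (c', s'))}"

definition graph_components :: "('c, 'e, 'm) diagram \<Rightarrow> 'c set set" where
  "graph_components D = crs D // ((adj D)\<^sup>*)"

definition strand_rel :: "('c, 'e, 'm) diagram \<Rightarrow> ('e \<times> 'e) set" where
  "strand_rel D = {(inov D c, outov D c) | c. c \<in> crs D} \<union> {(inun D c, outun D c) | c. c \<in> crs D}"

text \<open>A classical oriented link diagram: well-formed 4-valent graph, every edge
has exactly one tail and one head, the rotation system is planar (Euler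
characteristic 2 for each connected component), and the labels enumerate the
link components bijectively by 'm.\<close>

definition link_diagram :: "('c, 'e, 'm) diagram \<Rightarrow> bool" where
  "link_diagram D \<longleftrightarrow>
     finite (crs D) \<and> finite (edg D) \<and>
     (\<forall>d \<in> darts D. edge_at D d \<in> edg D) \<and>
     (\<forall>e \<in> edg D. \<exists>!d. d \<in> darts D \<and> is_out (snd d) \<and> edge_at D d = e) \<and>
     (\<forall>e \<in> edg D. \<exists>!d. d \<in> darts D \<and> \<not> is_out (snd d) \<and> edge_at D d = e) \<and>
     card (faces D) = card (crs D) + 2 * card (graph_components D) \<and>
     (\<forall>c \<in> crs D. labE D (inov D c) = labE D (outov D c) \<and>
                  labE D (inun D c) = labE D (outun D c)) \<and>
     (\<forall>e \<in> edg D. \<forall>e' \<in> edg D. labE D e = labE D e' \<longrightarrow> (e, e') \<in> (strand_rel D)\<^sup>*) \<and>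
     inj_on (labL D) {..<nloops D} \<and>
     labL D ` {..<nloops D} \<inter> labE D ` edg D = {} \<and>
     labE D ` edg D \<union> labL D ` {..<nloops D} = UNIV"

definition arc_rel :: "('c, 'e, 'm) diagram \<Rightarrow> ('e \<times> 'e) set" where
  "arc_rel D = {(inov D c, outov D c) | c. c \<in> crs D}"

text \<open>Arcs: classes of edges connected through over-passages, plus one arc for
each crossingless circle.\<close>

definition arc_of :: "('c, 'e, 'm) diagram \<Rightarrow> 'e \<Rightarrow> 'e set + nat" where
  "arc_of D e = Inl (((arc_rel D) \<union> (arc_rel D)\<inverse>)\<^sup>* `` {e})"

definition arcs :: "('c, 'e, 'm) diagram \<Rightarrow> ('e set + nat) set" where
  "arcs D = arc_of D ` edg D \<union> Inr ` {..<nloops D}"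

definition kappa :: "('c, 'e, 'm) diagram \<Rightarrow> 'e set + nat \<Rightarrow> 'm" where
  "kappa D a = (case a of Inl S \<Rightarrow> labE D (SOME e. e \<in> S) | Inr i \<Rightarrow> labL D i)"

text \<open>At a crossing: a1 over-arc, a2 under-arc on the right of a1, a3 under-arc on the left.\<close>

definition a1 :: "('c, 'e, 'm) diagram \<Rightarrow> 'c \<Rightarrow> 'e set + nat" where
  "a1 D c = arc_of D (inov D c)"

definition a2 :: "('c, 'e, 'm) diagram \<Rightarrow> 'c \<Rightarrow> 'e set + nat" where
  "a2 D c = (if pos D c then arc_of D (inun D c) else arc_of D (outun D c))"

definition a3 :: "('c, 'e, 'm) diagram \<Rightarrow> 'c \<Rightarrow> 'e set + nat" where
  "a3 D c = (if pos D c then arc_of D (outun D c) else arc_of D (inun D c))"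

section \<open>Laurent polynomial rings\<close>

text \<open>Lambda_mu = Z[t_i^{+-1} : i in 'm] as the group ring of 'm => int;
Lambda = Z[t^{+-1}] as the group ring of int.\<close>

type_synonym 'm lp = "('m \<Rightarrow> int) \<Rightarrow>\<^sub>0 int"
type_synonym lp1 = "int \<Rightarrow>\<^sub>0 int"

definition tvar :: "'m \<Rightarrow> 'm lp" where
  "tvar i = Poly_Mapping.single (\<lambda>j. if j = i then 1 else 0) 1"

definition tau :: "('m::finite) lp \<Rightarrow> lp1" where
  "tau f = (\<Sum>v \<in> Poly_Mapping.keys f. Poly_Mapping.single (sum v UNIV) (Poly_Mapping.lookup f v))"

definition augmentation_ideal :: "'m lp set" where
  "augmentation_ideal = {f. (\<Sum>v \<in> Poly_Mapping.keys f. Poly_Mapping.lookup f v) = 0}"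

section \<open>The Alexander module M_A(L) = coker rho_D (elements of the free module
Lambda_mu^{A(D)} as representatives)\<close>

type_synonym ('e, 'm) fmod = "'e set + nat \<Rightarrow> 'm lp"

definition free_mod :: "('c, 'e, 'm) diagram \<Rightarrow> ('e, 'm) fmod set" where
  "free_mod D = {x. \<forall>a. a \<notin> arcs D \<longrightarrow> x a = 0}"

definition basis :: "'e set + nat \<Rightarrow> ('e, 'm) fmod" where
  "basis a = (\<lambda>b. if b = a then 1 else 0)"

definition smul :: "'m lp \<Rightarrow> ('e, 'm) fmod \<Rightarrow> ('e, 'm) fmod" where
  "smul r x = (\<lambda>b. r * x b)"

definition rho :: "('c, 'e, 'm) diagram \<Rightarrow> 'c \<Rightarrow> ('e, 'm) fmod" where
  "rho D c = smul (1 - tvar (kappa D (a2 D c))) (basis (a1 D c))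
           + smul (tvar (kappa D (a1 D c))) (basis (a2 D c)) - basis (a3 D c)"

definition im_rho :: "('c, 'e, 'm) diagram \<Rightarrow> ('e, 'm) fmod set" where
  "im_rho D = {(\<lambda>b. \<Sum>c \<in> crs D. r c * rho D c b) | r. True}"

definition mcong :: "('c, 'e, 'm) diagram \<Rightarrow> ('e, 'm) fmod \<Rightarrow> ('e, 'm) fmod \<Rightarrow> bool" where
  "mcong D x y \<longleftrightarrow> x - y \<in> im_rho D"

definition phiL :: "('c, 'e, 'm) diagram \<Rightarrow> ('e, 'm) fmod \<Rightarrow> 'm lp" where
  "phiL D x = (\<Sum>a \<in> arcs D. x a * (tvar (kappa D a) - 1))"

definition qop :: "('c, 'e, 'm) diagram \<Rightarrow> ('e, 'm) fmod \<Rightarrow> ('e, 'm) fmod \<Rightarrow> ('e, 'm) fmod" where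
  "qop D x y = smul (phiL D y + 1) x - smul (phiL D x) y"

definition UL :: "('c, 'e, 'm) diagram \<Rightarrow> ('e, 'm) fmod set" where
  "UL D = {x \<in> free_mod D. (\<exists>v. (phiL D x + 1) * v = 1)}"

text \<open>Q_A(L), as the set of all representatives of its elements (a union of
cosets of im rho): the subquandle of U(L) generated by the arcs, closed under
the operation and under its inverse z = beta_y^{-1}(x).\<close>

inductive_set QA :: "('c, 'e, 'm) diagram \<Rightarrow> ('e, 'm) fmod set" for D where
  gen: "a \<in> arcs D \<Longrightarrow> basis a \<in> QA D"
| cong: "x \<in> QA D \<Longrightarrow> y \<in> free_mod D \<Longrightarrow> mcong D x y \<Longrightarrow> y \<in> QA D"
| op: "x \<in> QA D \<Longrightarrow> y \<in> QA D \<Longrightarrow> qop D x y \<in> QA D"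
| inv: "x \<in> QA D \<Longrightarrow> y \<in> QA D \<Longrightarrow> z \<in> UL D \<Longrightarrow> mcong D (qop D z y) x \<Longrightarrow> z \<in> QA D"

section \<open>Tensor products (F / K) \<otimes>_{Lambda_mu} Lambda, by the literal construction:
free abelian group on pairs modulo bilinearity, balancing and K\<close>

definition gpair :: "'x \<Rightarrow> lp1 \<Rightarrow> ('x \<times> lp1) \<Rightarrow>\<^sub>0 int" where
  "gpair x l = Poly_Mapping.single (x, l) 1"

inductive_set tens_rels :: "'x::ab_group_add set \<Rightarrow> 'x set \<Rightarrow> ('m::finite lp \<Rightarrow> 'x \<Rightarrow> 'x)
    \<Rightarrow> (('x \<times> lp1) \<Rightarrow>\<^sub>0 int) set" for F K sm where
  zero: "0 \<in> tens_rels F K sm"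
| add1: "x \<in> F \<Longrightarrow> x' \<in> F \<Longrightarrow> gpair (x + x') l - gpair x l - gpair x' l \<in> tens_rels F K sm"
| add2: "x \<in> F \<Longrightarrow> gpair x (l + l') - gpair x l - gpair x l' \<in> tens_rels F K sm"
| bal: "x \<in> F \<Longrightarrow> gpair (sm r x) l - gpair x (tau r * l) \<in> tens_rels F K sm"
| ker: "k \<in> K \<Longrightarrow> gpair k l \<in> tens_rels F K sm"
| plus: "f \<in> tens_rels F K sm \<Longrightarrow> g \<in> tens_rels F K sm \<Longrightarrow> f + g \<in> tens_rels F K sm"
| neg: "f \<in> tens_rels F K sm \<Longrightarrow> - f \<in> tens_rels F K sm"

definition tens_chains :: "'x set \<Rightarrow> (('x \<times> lp1) \<Rightarrow>\<^sub>0 int) set" where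
  "tens_chains F = {f. Poly_Mapping.keys f \<subseteq> F \<times> UNIV}"

definition tens_equiv :: "'x::ab_group_add set \<Rightarrow> 'x set \<Rightarrow> ('m::finite lp \<Rightarrow> 'x \<Rightarrow> 'x)
    \<Rightarrow> ((('x \<times> lp1) \<Rightarrow>\<^sub>0 int) \<times> (('x \<times> lp1) \<Rightarrow>\<^sub>0 int)) set" where
  "tens_equiv F K sm = {(f, g). f \<in> tens_chains F \<and> g \<in> tens_chains F \<and> f - g \<in> tens_rels F K sm}"

definition tensor :: "'x::ab_group_add set \<Rightarrow> 'x set \<Rightarrow> ('m::finite lp \<Rightarrow> 'x \<Rightarrow> 'x)
    \<Rightarrow> (('x \<times> lp1) \<Rightarrow>\<^sub>0 int) set set" where
  "tensor F K sm = tens_chains F // tens_equiv F K sm"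

definition tcls :: "'x::ab_group_add set \<Rightarrow> 'x set \<Rightarrow> ('m::finite lp \<Rightarrow> 'x \<Rightarrow> 'x)
    \<Rightarrow> (('x \<times> lp1) \<Rightarrow>\<^sub>0 int) \<Rightarrow> (('x \<times> lp1) \<Rightarrow>\<^sub>0 int) set" where
  "tcls F K sm f = tens_equiv F K sm `` {f}"

definition ptens :: "'x::ab_group_add set \<Rightarrow> 'x set \<Rightarrow> ('m::finite lp \<Rightarrow> 'x \<Rightarrow> 'x)
    \<Rightarrow> 'x \<Rightarrow> lp1 \<Rightarrow> (('x \<times> lp1) \<Rightarrow>\<^sub>0 int) set" where
  "ptens F K sm x l = tcls F K sm (gpair x l)"

definition Mred :: "('c, 'e, 'm::finite) diagram \<Rightarrow> ((('e, 'm) fmod \<times> lp1) \<Rightarrow>\<^sub>0 int) set set" where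
  "Mred D = tensor (free_mod D) (im_rho D) smul"

definition Ired :: "((('m::finite) lp \<times> lp1) \<Rightarrow>\<^sub>0 int) set set" where
  "Ired = tensor augmentation_ideal {0} (*)"

definition ItensOne :: "('m::finite) lp \<Rightarrow> (('m lp \<times> lp1) \<Rightarrow>\<^sub>0 int) set" where
  "ItensOne x = ptens augmentation_ideal {0} (*) x 1"

text \<open>phi_tau = phi_L \<otimes> id, applied to a class via any representative chain\<close>
definition phi_tau :: "('c, 'e, 'm::finite) diagram \<Rightarrow> ((('e, 'm) fmod \<times> lp1) \<Rightarrow>\<^sub>0 int) set
    \<Rightarrow> (('m lp \<times> lp1) \<Rightarrow>\<^sub>0 int) set" where
  "phi_tau D W = tcls augmentation_ideal {0} (*)
      (frag_extend (\<lambda>(x, l). gpair (phiL D x) l) (SOME f. f \<in> W))"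

definition QAred :: "('c, 'e, 'm::finite) diagram \<Rightarrow> ((('e, 'm) fmod \<times> lp1) \<Rightarrow>\<^sub>0 int) set set" where
  "QAred D = (\<lambda>x. ptens (free_mod D) (im_rho D) smul x 1) ` QA D"

end

theory Submission
  imports Defs
begin

text \<open>Elements of \<open>M\<^sub>A\<^sup>r\<^sup>e\<^sup>d(L)\<close> are represented by coefficient vectors \<open>v : A(D) \<rightarrow> \<Lambda>\<close>, standing
  for \<open>\<Sum>\<^sub>a a \<otimes> v\<^sub>a\<close>. Modulo relations the reduced quandle operation is that of the Alexander
  quandle, \<open>v \<triangleright> w = t v + (1 - t) w\<close>, so the vectors representing \<open>Q\<^sub>A\<^sup>r\<^sup>e\<^sup>d(L)\<close> are closed under
  translation by \<open>(1 - t) p (u - u')\<close>; the crossing relations make \<open>p (a - a')\<close> such a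
  translation whenever the arcs \<open>a, a'\<close> lie on a common component. Conversely \<open>\<phi>\<^sub>\<tau>\<close> determines
  \<open>\<Sum>\<^sub>a v\<^sub>a\<close> (through \<open>x \<otimes> l \<mapsto> \<tau>(x) l\<close>) and the augmentations of the component sums
  \<open>\<Sum>\<^bsub>\<kappa>(a) = j\<^esub> v\<^sub>a\<close> (through \<open>x \<otimes> l \<mapsto> \<partial>x/\<partial>t\<^sub>j(1) \<epsilon>(l)\<close>). If \<open>\<phi>\<^sub>\<tau>(W) = (t\<^sub>i - 1) \<otimes> 1\<close>,
  these are \<open>1\<close> and \<open>\<delta>\<^sub>i\<^sub>j\<close>, and then \<open>v\<close> is an arc of component \<open>i\<close> plus such translations.\<close>

section \<open>Linear functionals on group rings\<close>

definition lin_ext :: "('k \<Rightarrow> int) \<Rightarrow> ('k \<Rightarrow>\<^sub>0 int) \<Rightarrow> int" where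
  "lin_ext h f = (\<Sum>v\<in>Poly_Mapping.keys f. Poly_Mapping.lookup f v * h v)"

lemma lin_ext_superset:
  "finite S \<Longrightarrow> Poly_Mapping.keys f \<subseteq> S \<Longrightarrow> lin_ext h f = (\<Sum>v\<in>S. Poly_Mapping.lookup f v * h v)"
  unfolding lin_ext_def by (rule sum.mono_neutral_left) (auto simp: in_keys_iff)

lemma lin_ext_add: "lin_ext h (f + g) = lin_ext h f + lin_ext h g"
proof -
  let ?S = "Poly_Mapping.keys f \<union> Poly_Mapping.keys g"
  have "lin_ext h (f + g) = (\<Sum>v\<in>?S. Poly_Mapping.lookup (f + g) v * h v)"
    by (rule lin_ext_superset) (auto simp: keys_add)
  also have "\<dots> = (\<Sum>v\<in>?S. Poly_Mapping.lookup f v * h v) + (\<Sum>v\<in>?S. Poly_Mapping.lookup g v * h v)"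
    by (simp add: lookup_add algebra_simps sum.distrib)
  also have "\<dots> = lin_ext h f + lin_ext h g"
    by (simp add: lin_ext_superset[symmetric])
  finally show ?thesis .
qed

lemma lin_ext_diff: "lin_ext h (f - g) = lin_ext h f - lin_ext h g"
  using lin_ext_add[of h "f - g" g] by simp

lemma lin_ext_zero [simp]: "lin_ext h 0 = 0"
  by (simp add: lin_ext_def)

lemma lin_ext_single [simp]: "lin_ext h (Poly_Mapping.single k c) = c * h k"
  unfolding lin_ext_def by (cases "c = 0") auto

lemma lin_ext_sum: "finite I \<Longrightarrow> lin_ext h (\<Sum>i\<in>I. g i) = (\<Sum>i\<in>I. lin_ext h (g i))"
  by (induction I rule: finite_induct) (auto simp: lin_ext_add)

lemma poly_mapping_bilinear_eqI:
  fixes B1 B2 :: "('k \<Rightarrow>\<^sub>0 int) \<Rightarrow> ('k \<Rightarrow>\<^sub>0 int) \<Rightarrow> 'r::ab_group_add"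
  assumes "\<And>a b g. B1 (a - b) g = B1 a g - B1 b g" "\<And>a b g. B2 (a - b) g = B2 a g - B2 b g"
    and "\<And>a b f. B1 f (a - b) = B1 f a - B1 f b" "\<And>a b f. B2 f (a - b) = B2 f a - B2 f b"
    and "\<And>x y. B1 (frag_of x) (frag_of y) = B2 (frag_of x) (frag_of y)"
  shows "B1 f g = B2 f g"
proof -
  have zero_left: "B1 0 g = 0" "B2 0 g = 0" for g
    using assms(1)[of 0 0 g] assms(2)[of 0 0 g] by auto
  have zero_right: "B1 f' 0 = 0" "B2 f' 0 = 0" for f'
    using assms(3)[of f' 0 0] assms(4)[of f' 0 0] by auto
  have on_generators: "B1 (frag_of x) g = B2 (frag_of x) g" for x
    using subset_UNIV[of "Poly_Mapping.keys g"]
    by (induction g rule: frag_induction) (auto simp: zero_right assms)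
  show ?thesis
    using subset_UNIV[of "Poly_Mapping.keys f"]
    by (induction f rule: frag_induction) (auto simp: zero_left assms on_generators)
qed

lemma lin_ext_mult:
  fixes h :: "'k::comm_monoid_add \<Rightarrow> int"
  assumes "\<And>a b. h (a + b) = h a * h b"
  shows "lin_ext h (f * g) = lin_ext h f * lin_ext h g"
  by (rule poly_mapping_bilinear_eqI[of "\<lambda>f g. lin_ext h (f * g)" "\<lambda>f g. lin_ext h f * lin_ext h g"])
     (auto simp: lin_ext_diff algebra_simps mult_single assms)

lemma lin_ext_mult_derivation:
  fixes d :: "'k::comm_monoid_add \<Rightarrow> int"
  assumes "\<And>a b. d (a + b) = d a + d b"
  shows "lin_ext d (f * g) = lin_ext (\<lambda>_. 1) f * lin_ext d g + lin_ext d f * lin_ext (\<lambda>_. 1) g"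
  by (rule poly_mapping_bilinear_eqI[of "\<lambda>f g. lin_ext d (f * g)"
        "\<lambda>f g. lin_ext (\<lambda>_. 1) f * lin_ext d g + lin_ext d f * lin_ext (\<lambda>_. 1) g"])
     (auto simp: lin_ext_diff algebra_simps mult_single assms)

definition augmentation :: "('k \<Rightarrow>\<^sub>0 int) \<Rightarrow> int" where
  "augmentation = lin_ext (\<lambda>_. 1)"

text \<open>The partial derivative with respect to \<open>t\<^sub>j\<close>, evaluated at \<open>t = (1, \<dots>, 1)\<close>.\<close>

definition partial_at_one :: "'m \<Rightarrow> 'm lp \<Rightarrow> int" where
  "partial_at_one j = lin_ext (\<lambda>v. v j)"

lemma augmentation_ideal_iff: "f \<in> augmentation_ideal \<longleftrightarrow> augmentation f = 0"
  by (simp add: augmentation_ideal_def augmentation_def lin_ext_def)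

lemma augmentation_add: "augmentation (f + g) = augmentation f + augmentation g"
  by (simp add: augmentation_def lin_ext_add)

lemma augmentation_diff: "augmentation (f - g) = augmentation f - augmentation g"
  by (simp add: augmentation_def lin_ext_diff)

lemma augmentation_zero [simp]: "augmentation 0 = 0"
  by (simp add: augmentation_def)

lemma augmentation_single [simp]: "augmentation (Poly_Mapping.single k c) = c"
  by (simp add: augmentation_def)

lemma augmentation_one [simp]: "augmentation (1 :: ('k::zero) \<Rightarrow>\<^sub>0 int) = 1"
  by (metis augmentation_single single_one)

lemma augmentation_sum: "finite I \<Longrightarrow> augmentation (\<Sum>i\<in>I. g i) = (\<Sum>i\<in>I. augmentation (g i))"
  by (simp add: augmentation_def lin_ext_sum)

lemma augmentation_mult:
  "augmentation (f * g) = augmentation f * augmentation (g :: ('k::comm_monoid_add) \<Rightarrow>\<^sub>0 int)"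
  unfolding augmentation_def by (rule lin_ext_mult) simp

lemma partial_at_one_zero [simp]: "partial_at_one j 0 = 0"
  by (simp add: partial_at_one_def)

lemma partial_at_one_add: "partial_at_one j (f + g) = partial_at_one j f + partial_at_one j g"
  by (simp add: partial_at_one_def lin_ext_add)

lemma partial_at_one_mult:
  "partial_at_one j (f * g) = augmentation f * partial_at_one j g + partial_at_one j f * augmentation g"
  unfolding partial_at_one_def augmentation_def by (rule lin_ext_mult_derivation) simp

lemma partial_at_one_tvar: "partial_at_one j (tvar i - 1) = (if i = j then 1 else 0)"
  by (auto simp: partial_at_one_def lin_ext_diff tvar_def simp flip: single_one)

lemma augmentation_tvar: "augmentation (tvar i - 1) = 0"
  by (simp add: augmentation_diff tvar_def)

lemma tau_eq_frag_extend: "tau f = frag_extend (\<lambda>v. frag_of (sum v UNIV)) f"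
proof -
  have "frag_cmul c (frag_of k) = Poly_Mapping.single k c" for c and k :: int
    by (rule poly_mapping_eqI) (simp add: lookup_single when_def)
  then show ?thesis
    unfolding tau_def frag_extend_def by simp
qed

lemma tau_add: "tau (f + g) = tau f + tau g"
  by (simp add: tau_eq_frag_extend frag_extend_add)

lemma tau_diff: "tau (f - g) = tau f - tau g"
  by (simp add: tau_eq_frag_extend frag_extend_diff)

lemma tau_zero [simp]: "tau 0 = 0"
  by (simp add: tau_def)

lemma tau_single: "tau (Poly_Mapping.single v c) = Poly_Mapping.single (sum v UNIV) c"
  by (simp add: tau_def)

lemma tau_mult: "tau (f * g) = tau f * tau g"
  by (rule poly_mapping_bilinear_eqI[of "\<lambda>f g. tau (f * g)" "\<lambda>f g. tau f * tau g"])
     (auto simp: tau_diff algebra_simps mult_single tau_single sum.distrib)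

lemma tau_one [simp]: "tau 1 = 1"
  by (metis single_one tau_single sum.neutral zero_fun_def)

lemma augmentation_tau: "augmentation (tau f) = augmentation f"
  using subset_UNIV[of "Poly_Mapping.keys f"]
  by (induction f rule: frag_induction) (auto simp: tau_diff augmentation_diff tau_single)

definition tvar_inv :: "'m \<Rightarrow> 'm lp" where
  "tvar_inv i = Poly_Mapping.single (\<lambda>j. if j = i then -1 else 0) 1"

abbreviation tt :: lp1 where "tt \<equiv> Poly_Mapping.single 1 1"
abbreviation tt_inv :: lp1 where "tt_inv \<equiv> Poly_Mapping.single (-1) 1"

lemma tvar_tvar_inv: "tvar i * tvar_inv i = 1"
proof -
  have "(\<lambda>j. if j = i then 1 else 0) + (\<lambda>j. if j = i then -1 else (0::int)) = 0"
    by (auto simp: fun_eq_iff)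
  then show ?thesis by (simp add: tvar_def tvar_inv_def mult_single)
qed

lemma tt_tt_inv: "tt * tt_inv = 1" "tt_inv * tt = 1"
  by (simp_all add: mult_single)

lemma tau_tvar [simp]: "tau (tvar (i::'m::finite)) = tt"
  by (simp add: tvar_def tau_single)

lemma tau_tvar_inv [simp]: "tau (tvar_inv (i::'m::finite)) = tt_inv"
  by (simp add: tvar_inv_def tau_single)

lemma tt_minus_one_neq_zero: "tt - 1 \<noteq> (0 :: lp1)"
proof
  assume "tt - 1 = (0 :: lp1)"
  then have "Poly_Mapping.lookup (tt - 1) 1 = Poly_Mapping.lookup (0 :: lp1) 1" by simp
  then show False by (simp add: lookup_minus lookup_one)
qed

lemma one_minus_tt_dvd_monomial: "1 - tt dvd Poly_Mapping.single k 1 - 1"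
proof (induction k rule: int_induct[where k = 0])
  case base
  show ?case by simp
next
  case (step1 i)
  have "Poly_Mapping.single (i + 1) 1 - 1 = tt * (Poly_Mapping.single i 1 - 1) - (1 - tt)"
    by (simp add: mult_single add.commute algebra_simps)
  moreover have "1 - tt dvd tt * (Poly_Mapping.single i 1 - 1) - (1 - tt)"
    by (rule dvd_diff[OF dvd_mult[OF step1(2)] dvd_refl])
  ultimately show ?case by (simp only:)
next
  case (step2 i)
  have "Poly_Mapping.single (i - 1) 1 - 1 = tt_inv * (Poly_Mapping.single i 1 - 1) + tt_inv * (1 - tt)"
    by (simp add: mult_single algebra_simps)
  moreover have "1 - tt dvd tt_inv * (Poly_Mapping.single i 1 - 1) + tt_inv * (1 - tt)"
    by (rule dvd_add[OF dvd_mult[OF step2(2)] dvd_mult[OF dvd_refl]])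
  ultimately show ?case by (simp only:)
qed

lemma one_minus_tt_dvd: "augmentation p = 0 \<Longrightarrow> 1 - tt dvd p"
proof -
  have "1 - tt dvd p - of_int (augmentation p)"
    using subset_UNIV[of "Poly_Mapping.keys p"]
  proof (induction p rule: frag_induction)
    case (one k)
    then show ?case using one_minus_tt_dvd_monomial[of k] by simp
  next
    case (diff a b)
    then show ?case
      using dvd_diff[OF diff.IH] by (simp add: augmentation_diff algebra_simps)
  qed simp
  then show "augmentation p = 0 \<Longrightarrow> 1 - tt dvd p" by simp
qed

lemma gpair_eq_frag_of: "gpair x l = frag_of (x, l)"
  by (simp add: gpair_def)

lemma tens_rels_diff:
  "f \<in> tens_rels F K sm \<Longrightarrow> g \<in> tens_rels F K sm \<Longrightarrow> f - g \<in> tens_rels F K sm"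
  using tens_rels.plus[OF _ tens_rels.neg, of f F K sm g] by simp

lemma tens_rels_sum:
  "finite I \<Longrightarrow> (\<And>i. i \<in> I \<Longrightarrow> g i \<in> tens_rels F K sm) \<Longrightarrow> (\<Sum>i\<in>I. g i) \<in> tens_rels F K sm"
  by (induction I rule: finite_induct) (simp_all add: tens_rels.zero tens_rels.plus)

lemma frag_extend_tens_rels:
  assumes "f \<in> tens_rels F K sm"
    and "0 \<in> S" "\<And>a b. a \<in> S \<Longrightarrow> b \<in> S \<Longrightarrow> a + b \<in> S" "\<And>a. a \<in> S \<Longrightarrow> - a \<in> S"
    and "\<And>x x' l. x \<in> F \<Longrightarrow> x' \<in> F \<Longrightarrow> G (x + x', l) - G (x, l) - G (x', l) \<in> S"
    and "\<And>x l l'. x \<in> F \<Longrightarrow> G (x, l + l') - G (x, l) - G (x, l') \<in> S"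
    and "\<And>x r l. x \<in> F \<Longrightarrow> G (sm r x, l) - G (x, tau r * l) \<in> S"
    and "\<And>k l. k \<in> K \<Longrightarrow> G (k, l) \<in> S"
  shows "frag_extend G f \<in> S"
  using assms(1)
  by (induction rule: tens_rels.induct)
     (auto simp: gpair_eq_frag_of frag_extend_diff frag_extend_add frag_extend_minus assms(2-))

lemma frag_extend_tens_rels_eq_0:
  assumes "f \<in> tens_rels F K sm"
    and "\<And>x x' l. x \<in> F \<Longrightarrow> x' \<in> F \<Longrightarrow> G (x + x', l) = G (x, l) + G (x', l)"
    and "\<And>x l l'. x \<in> F \<Longrightarrow> G (x, l + l') = G (x, l) + G (x, l')"
    and "\<And>x r l. x \<in> F \<Longrightarrow> G (sm r x, l) = G (x, tau r * l)"
    and "\<And>k l. k \<in> K \<Longrightarrow> G (k, l) = 0"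
  shows "frag_extend G f = 0"
  using frag_extend_tens_rels[OF assms(1), of "{0}" G] by (simp add: assms(2-))

lemma gpair_in_tens_chains: "x \<in> F \<Longrightarrow> gpair x l \<in> tens_chains F"
  by (simp add: tens_chains_def gpair_def)

lemma equiv_tens_equiv: "equiv (tens_chains F) (tens_equiv F K sm)"
proof (rule equivI)
  show "tens_equiv F K sm \<subseteq> tens_chains F \<times> tens_chains F"
    unfolding tens_equiv_def by blast
  show "refl_on (tens_chains F) (tens_equiv F K sm)"
    unfolding refl_on_def tens_equiv_def using tens_rels.zero by fastforce
  show "sym (tens_equiv F K sm)"
    unfolding tens_equiv_def by (rule symI) (use tens_rels.neg in fastforce)
  show "trans (tens_equiv F K sm)"
    unfolding tens_equiv_def by (rule transI) (use tens_rels.plus in fastforce)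
qed

lemma tcls_eqI:
  "f \<in> tens_chains F \<Longrightarrow> g \<in> tens_chains F \<Longrightarrow> f - g \<in> tens_rels F K sm \<Longrightarrow>
    tcls F K sm f = tcls F K sm g"
  unfolding tcls_def by (rule equiv_class_eq[OF equiv_tens_equiv]) (simp add: tens_equiv_def)

lemma tcls_self: "f \<in> tens_chains F \<Longrightarrow> f \<in> tcls F K sm f"
  unfolding tcls_def by (rule equiv_class_self[OF equiv_tens_equiv])

lemma tcls_memD: "g \<in> tcls F K sm f \<Longrightarrow> g \<in> tens_chains F \<and> f - g \<in> tens_rels F K sm"
  unfolding tcls_def tens_equiv_def by blast

lemma tcls_eqD:
  assumes "f \<in> tens_chains F" "tcls F K sm f = tcls F K sm g"
  shows "g - f \<in> tens_rels F K sm"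
  using tcls_self[OF assms(1), of K sm] assms(2) unfolding tcls_def tens_equiv_def by blast

lemma some_in_tcls:
  assumes "f \<in> tens_chains F"
  shows "(SOME g. g \<in> tcls F K sm f) \<in> tens_chains F"
    and "f - (SOME g. g \<in> tcls F K sm f) \<in> tens_rels F K sm"
  using someI[of "\<lambda>g. g \<in> tcls F K sm f", OF tcls_self[OF assms]] by (auto dest: tcls_memD)

section \<open>Arcs, the map \<open>\<phi>\<^sub>L\<close> and the quandle \<open>Q\<^sub>A(L)\<close>\<close>

lemma if_one_zero_mult [simp]:
  "(if P then 1 else 0) * y = (if P then y else (0 :: 'a::semiring_1))"
  "y * (if P then 1 else 0) = (if P then y else 0)"
  by simp_all

locale oriented_link =
  fixes D :: "('c, 'e, 'm::finite) diagram"
  assumes link_diagram: "link_diagram D"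
begin

lemma finite_crs: "finite (crs D)"
  using link_diagram by (simp add: link_diagram_def)

lemma finite_arcs: "finite (arcs D)"
proof -
  have "finite (edg D)"
    using link_diagram by (simp add: link_diagram_def)
  then show ?thesis by (simp add: arcs_def)
qed

lemma crossing_edges_in_edg:
  assumes "c \<in> crs D"
  shows "inov D c \<in> edg D" "outov D c \<in> edg D" "inun D c \<in> edg D" "outun D c \<in> edg D"
proof -
  have "\<forall>d \<in> darts D. edge_at D d \<in> edg D"
    using link_diagram by (simp add: link_diagram_def)
  then have "edge_at D (c, s) \<in> edg D" for s
    using assms by (simp add: darts_def)
  from this[of SIO] this[of SOO] this[of SIU] this[of SOU] show
    "inov D c \<in> edg D" "outov D c \<in> edg D" "inun D c \<in> edg D" "outun D c \<in> edg D"
    by (simp_all add: edge_at_def)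
qed

lemma crossing_labels:
  "c \<in> crs D \<Longrightarrow> labE D (inov D c) = labE D (outov D c) \<and> labE D (inun D c) = labE D (outun D c)"
  using link_diagram by (simp add: link_diagram_def)

lemma labE_arc_rel_closure:
  "(e, e') \<in> (arc_rel D \<union> (arc_rel D)\<inverse>)\<^sup>* \<Longrightarrow> labE D e' = labE D e"
proof (induction rule: rtrancl_induct)
  case (step y z)
  then show ?case using crossing_labels by (auto simp: arc_rel_def)
qed simp

lemma kappa_arc_of: "kappa D (arc_of D e) = labE D e"
proof -
  let ?R = "(arc_rel D \<union> (arc_rel D)\<inverse>)\<^sup>*"
  have "e \<in> ?R `` {e}" by simp
  then have "(SOME e'. e' \<in> ?R `` {e}) \<in> ?R `` {e}" by (rule someI)
  then show ?thesis
    unfolding kappa_def arc_of_def using labE_arc_rel_closure by auto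
qed

lemma kappa_Inr: "kappa D (Inr k) = labL D k"
  by (simp add: kappa_def)

lemma arc_of_eq: "(e, e') \<in> arc_rel D \<Longrightarrow> arc_of D e = arc_of D e'"
  unfolding arc_of_def by (auto intro: rtrancl_trans)

lemma crossing_arcs_in_arcs:
  assumes "c \<in> crs D"
  shows "a1 D c \<in> arcs D" "a2 D c \<in> arcs D" "a3 D c \<in> arcs D"
  using crossing_edges_in_edg[OF assms] by (auto simp: a1_def a2_def a3_def arcs_def)

lemma kappa_a3: "c \<in> crs D \<Longrightarrow> kappa D (a3 D c) = kappa D (a2 D c)"
  using crossing_labels by (simp add: a2_def a3_def kappa_arc_of)

lemma free_mod_add: "x \<in> free_mod D \<Longrightarrow> y \<in> free_mod D \<Longrightarrow> x + y \<in> free_mod D"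
  by (simp add: free_mod_def)

lemma free_mod_diff: "x \<in> free_mod D \<Longrightarrow> y \<in> free_mod D \<Longrightarrow> x - y \<in> free_mod D"
  by (simp add: free_mod_def)

lemma free_mod_smul: "x \<in> free_mod D \<Longrightarrow> smul r x \<in> free_mod D"
  by (simp add: free_mod_def smul_def)

lemma basis_in_free_mod: "a \<in> arcs D \<Longrightarrow> basis a \<in> free_mod D"
  by (auto simp: free_mod_def basis_def)

lemma rho_in_free_mod: "c \<in> crs D \<Longrightarrow> rho D c \<in> free_mod D"
  unfolding rho_def by (intro free_mod_add free_mod_diff free_mod_smul basis_in_free_mod crossing_arcs_in_arcs)

lemma free_mod_sum:
  "finite I \<Longrightarrow> (\<And>i. i \<in> I \<Longrightarrow> g i \<in> free_mod D) \<Longrightarrow> (\<Sum>i\<in>I. g i) \<in> free_mod D"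
  by (induction I rule: finite_induct) (simp_all add: free_mod_add, simp add: free_mod_def)

lemma free_mod_expansion: "x \<in> free_mod D \<Longrightarrow> x = (\<Sum>a\<in>arcs D. smul (x a) (basis a))"
proof (rule ext)
  fix b assume x: "x \<in> free_mod D"
  have "(\<Sum>a\<in>A. smul (x a) (basis a)) b = (\<Sum>a\<in>A. x a * basis a b)" for A
    by (induction A rule: infinite_finite_induct) (auto simp: smul_def)
  then show "x b = (\<Sum>a\<in>arcs D. smul (x a) (basis a)) b"
    using x finite_arcs by (cases "b \<in> arcs D") (auto simp: basis_def free_mod_def)
qed

lemma zero_in_im_rho: "0 \<in> im_rho D"
  unfolding im_rho_def by (rule CollectI, rule exI[of _ "\<lambda>_. 0"]) (simp add: fun_eq_iff)

lemma rho_in_im_rho: "c \<in> crs D \<Longrightarrow> rho D c \<in> im_rho D"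
  unfolding im_rho_def
  by (rule CollectI, rule exI[of _ "\<lambda>c'. if c' = c then 1 else 0"]) (simp add: fun_eq_iff finite_crs)

lemma phiL_add: "phiL D (x + y) = phiL D x + phiL D y"
  by (simp add: phiL_def distrib_right sum.distrib)

lemma phiL_diff: "phiL D (x - y) = phiL D x - phiL D y"
  by (simp add: phiL_def left_diff_distrib sum_subtractf)

lemma phiL_smul: "phiL D (smul r x) = r * phiL D x"
  by (simp add: phiL_def smul_def sum_distrib_left mult.assoc)

lemma phiL_basis: "a \<in> arcs D \<Longrightarrow> phiL D (basis a) = tvar (kappa D a) - 1"
  using finite_arcs by (simp add: phiL_def basis_def)

lemma phiL_rho:
  assumes "c \<in> crs D"
  shows "phiL D (rho D c) = 0"
proof -
  let ?t1 = "tvar (kappa D (a1 D c))" and ?t2 = "tvar (kappa D (a2 D c))"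
  have "phiL D (rho D c) = (1 - ?t2) * (?t1 - 1) + ?t1 * (?t2 - 1) - (?t2 - 1)"
    unfolding rho_def phiL_add phiL_diff phiL_smul
    using assms by (simp add: phiL_basis crossing_arcs_in_arcs kappa_a3)
  also have "\<dots> = 0"
    by (simp add: algebra_simps)
  finally show ?thesis .
qed

lemma phiL_im_rho: "z \<in> im_rho D \<Longrightarrow> phiL D z = 0"
proof -
  assume "z \<in> im_rho D"
  then obtain r where z: "z = (\<lambda>b. \<Sum>c\<in>crs D. r c * rho D c b)"
    by (auto simp: im_rho_def)
  have "phiL D z = (\<Sum>c\<in>crs D. r c * phiL D (rho D c))"
    unfolding z phiL_def
    by (simp add: sum_distrib_right sum_distrib_left sum.swap[of _ "arcs D"] mult.assoc)
  then show ?thesis by (simp add: phiL_rho)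
qed

lemma phiL_in_augmentation_ideal: "phiL D x \<in> augmentation_ideal"
  using finite_arcs
  by (simp add: augmentation_ideal_iff phiL_def augmentation_sum augmentation_mult augmentation_tvar)

lemma phiL_qop: "phiL D (qop D x y) = phiL D x"
  by (simp add: qop_def phiL_diff phiL_smul algebra_simps)

lemma QA_subset_free_mod: "x \<in> QA D \<Longrightarrow> x \<in> free_mod D"
proof (induction rule: QA.induct)
  case (op x y)
  then show ?case unfolding qop_def by (intro free_mod_diff free_mod_smul)
qed (simp_all add: basis_in_free_mod UL_def)

lemma phiL_QA: "x \<in> QA D \<Longrightarrow> \<exists>i. phiL D x = tvar i - 1"
proof (induction rule: QA.induct)
  case (cong x y)
  then have "phiL D x - phiL D y = 0" by (simp add: mcong_def phiL_im_rho flip: phiL_diff)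
  then show ?case using cong by simp
next
  case (inv x y z)
  then have "phiL D (qop D z y - x) = 0" by (simp add: mcong_def phiL_im_rho)
  then have "phiL D z - phiL D x = 0" by (simp add: phiL_diff phiL_qop)
  then show ?case using inv by simp
qed (auto simp: phiL_basis phiL_qop)

end

definition vscale :: "'r::times \<Rightarrow> ('a \<Rightarrow> 'r) \<Rightarrow> 'a \<Rightarrow> 'r" where
  "vscale p v = (\<lambda>a. p * v a)"

lemma diff_diff_add_diff: "(p::'a::ab_group_add) - q - r + (r - s) = p - (q + s)"
  by simp

context oriented_link
begin

abbreviation Mrels :: "((('e, 'm) fmod \<times> lp1) \<Rightarrow>\<^sub>0 int) set" where
  "Mrels \<equiv> tens_rels (free_mod D) (im_rho D) smul"

definition arc_tensor :: "('e set + nat \<Rightarrow> lp1) \<Rightarrow> (('e, 'm) fmod \<times> lp1) \<Rightarrow>\<^sub>0 int" where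
  "arc_tensor v = (\<Sum>a\<in>arcs D. gpair (basis a) (v a))"

definition tau_coeffs :: "('e, 'm) fmod \<Rightarrow> 'e set + nat \<Rightarrow> lp1" where
  "tau_coeffs x = (\<lambda>a. tau (x a))"

definition null_vecs :: "('e set + nat \<Rightarrow> lp1) set" where
  "null_vecs = {z. arc_tensor z \<in> Mrels}"

lemma arc_tensor_add: "arc_tensor (v + w) - arc_tensor v - arc_tensor w \<in> Mrels"
proof -
  have "arc_tensor (v + w) - arc_tensor v - arc_tensor w =
      (\<Sum>a\<in>arcs D. gpair (basis a) (v a + w a) - gpair (basis a) (v a) - gpair (basis a) (w a))"
    by (simp add: arc_tensor_def sum_subtractf)
  also have "\<dots> \<in> Mrels"
    by (intro tens_rels_sum finite_arcs tens_rels.add2 basis_in_free_mod)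
  finally show ?thesis .
qed

lemma arc_tensor_diff: "arc_tensor (v - w) - (arc_tensor v - arc_tensor w) \<in> Mrels"
  using tens_rels.neg[OF arc_tensor_add[of "v - w" w]] by (simp add: algebra_simps)

lemma zero_in_null_vecs: "0 \<in> null_vecs"
  using tens_rels.neg[OF arc_tensor_add[of 0 0]] by (simp add: null_vecs_def)

lemma null_vecs_add: "z \<in> null_vecs \<Longrightarrow> z' \<in> null_vecs \<Longrightarrow> z + z' \<in> null_vecs"
  using tens_rels.plus[OF arc_tensor_add[of z z'] tens_rels.plus[of "arc_tensor z" _ _ _ "arc_tensor z'"]]
  by (simp add: null_vecs_def)

lemma null_vecs_if_zero_on_arcs: "(\<And>a. a \<in> arcs D \<Longrightarrow> z a = 0) \<Longrightarrow> z \<in> null_vecs"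
  using zero_in_null_vecs by (simp add: null_vecs_def arc_tensor_def)

lemma null_vecs_vscale:
  assumes "z \<in> null_vecs"
  shows "vscale p z \<in> null_vecs"
proof -
  let ?scale = "\<lambda>(x, l). gpair x (p * l)"
  have "frag_extend ?scale (arc_tensor z) \<in> Mrels"
    using assms unfolding null_vecs_def mem_Collect_eq
    by (rule frag_extend_tens_rels)
       (auto intro: tens_rels.intros simp: distrib_left mult.left_commute[of p])
  moreover have "frag_extend ?scale (arc_tensor z) = arc_tensor (vscale p z)"
    by (simp add: arc_tensor_def frag_extend_sum[OF finite_arcs] gpair_eq_frag_of vscale_def)
  ultimately show ?thesis
    by (simp add: null_vecs_def)
qed

lemma gpair_sum:
  "finite A \<Longrightarrow> (\<And>a. a \<in> A \<Longrightarrow> y a \<in> free_mod D) \<Longrightarrow>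
    gpair (\<Sum>a\<in>A. y a) l - (\<Sum>a\<in>A. gpair (y a) l) \<in> Mrels"
proof (induction A rule: finite_induct)
  case empty
  have "0 \<in> free_mod D" by (simp add: free_mod_def)
  from tens_rels.neg[OF tens_rels.add1[OF this this, of l]] show ?case
    by (simp only: add_0_left diff_self diff_0 minus_minus sum.empty diff_zero)
next
  case (insert a A)
  have "y a \<in> free_mod D" "sum y A \<in> free_mod D"
    using insert by (auto intro!: free_mod_sum)
  have "gpair (y a + sum y A) l - gpair (y a) l - gpair (sum y A) l
      + (gpair (sum y A) l - (\<Sum>a\<in>A. gpair (y a) l)) \<in> Mrels"
    using insert by (intro tens_rels.plus tens_rels.add1 free_mod_sum) auto
  then show ?case
    unfolding sum.insert[OF insert.hyps] by (simp only: diff_diff_add_diff)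
qed

lemma gpair_equiv_arc_tensor:
  assumes "x \<in> free_mod D"
  shows "gpair x l - arc_tensor (\<lambda>a. tau (x a) * l) \<in> Mrels"
proof -
  have "gpair x l - (\<Sum>a\<in>arcs D. gpair (smul (x a) (basis a)) l) \<in> Mrels"
    using gpair_sum[OF finite_arcs, of "\<lambda>a. smul (x a) (basis a)" l] free_mod_expansion[OF assms]
    by (simp add: free_mod_smul basis_in_free_mod)
  moreover have "(\<Sum>a\<in>arcs D. gpair (smul (x a) (basis a)) l) - arc_tensor (\<lambda>a. tau (x a) * l) \<in> Mrels"
    unfolding arc_tensor_def sum_subtractf[symmetric]
    by (intro tens_rels_sum finite_arcs tens_rels.bal basis_in_free_mod)
  ultimately show ?thesis
    using tens_rels.plus by fastforce
qed

lemma gpair_one_equiv_arc_tensor: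
  "x \<in> free_mod D \<Longrightarrow> gpair x 1 - arc_tensor (tau_coeffs x) \<in> Mrels"
  using gpair_equiv_arc_tensor[of x 1] by (simp add: tau_coeffs_def)

lemma chain_equiv_arc_tensor:
  assumes "f \<in> tens_chains (free_mod D)"
  shows "\<exists>v. f - arc_tensor v \<in> Mrels"
proof -
  have "Poly_Mapping.keys f \<subseteq> free_mod D \<times> UNIV"
    using assms by (simp add: tens_chains_def)
  then show ?thesis
  proof (induction f rule: frag_induction)
    case zero
    show ?case
      using zero_in_null_vecs tens_rels.neg by (fastforce simp: null_vecs_def)
  next
    case (one p)
    then show ?case
      using gpair_equiv_arc_tensor by (auto simp: gpair_eq_frag_of)
  next
    case (diff a b)
    then obtain va vb where "a - arc_tensor va \<in> Mrels" "b - arc_tensor vb \<in> Mrels"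
      by blast
    from tens_rels_diff[OF tens_rels_diff[OF this] arc_tensor_diff[of va vb]]
    have "(a - b) - arc_tensor (va - vb) \<in> Mrels"
      by (simp add: algebra_simps)
    then show ?case by blast
  qed
qed

end

section \<open>The reduced quandle as a set of coefficient vectors\<close>

lemma sum_apply: "(\<Sum>i\<in>I. f i) x = (\<Sum>i\<in>I. f i x)"
  by (induction I rule: infinite_finite_induct) auto

context oriented_link
begin

definition QA_vecs :: "('e set + nat \<Rightarrow> lp1) set" where
  "QA_vecs = {v. \<exists>x\<in>QA D. v - tau_coeffs x \<in> null_vecs}"

definition QA_translations :: "('e set + nat \<Rightarrow> lp1) set" where
  "QA_translations = {h. \<forall>v\<in>QA_vecs. v + h \<in> QA_vecs}"

lemma QA_vecsI: "x \<in> QA D \<Longrightarrow> v - tau_coeffs x \<in> null_vecs \<Longrightarrow> v \<in> QA_vecs"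
  unfolding QA_vecs_def by blast

lemma QA_vecsE:
  assumes "v \<in> QA_vecs"
  obtains x i where "x \<in> QA D" "v - tau_coeffs x \<in> null_vecs" "phiL D x = tvar i - 1"
  using assms phiL_QA unfolding QA_vecs_def by blast

lemma null_vecs_lin_comb:
  "z \<in> null_vecs \<Longrightarrow> z' \<in> null_vecs \<Longrightarrow> vscale p z + vscale q z' \<in> null_vecs"
  by (intro null_vecs_add null_vecs_vscale)

lemma tau_coeffs_basis_in_QA_vecs:
  assumes "a \<in> arcs D"
  shows "tau_coeffs (basis a) \<in> QA_vecs"
proof (rule QA_vecsI)
  show "basis a \<in> QA D"
    using assms by (rule QA.gen)
  show "tau_coeffs (basis a) - tau_coeffs (basis a) \<in> null_vecs"
    using zero_in_null_vecs by simp
qed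

lemma tau_coeffs_qop:
  assumes "phiL D x = tvar i - 1" "phiL D y = tvar j - 1"
  shows "tau_coeffs (qop D x y) = vscale tt (tau_coeffs x) - vscale (tt - 1) (tau_coeffs y)"
  using assms by (simp add: fun_eq_iff tau_coeffs_def qop_def smul_def vscale_def tau_diff tau_mult)

lemma QA_vecs_qop:
  assumes "v \<in> QA_vecs" "w \<in> QA_vecs"
  shows "vscale tt v + vscale (1 - tt) w \<in> QA_vecs"
proof -
  obtain x i where x: "x \<in> QA D" "v - tau_coeffs x \<in> null_vecs" "phiL D x = tvar i - 1"
    using assms(1) by (rule QA_vecsE)
  obtain y j where y: "y \<in> QA D" "w - tau_coeffs y \<in> null_vecs" "phiL D y = tvar j - 1"
    using assms(2) by (rule QA_vecsE)
  have "vscale tt (v - tau_coeffs x) + vscale (1 - tt) (w - tau_coeffs y) \<in> null_vecs"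
    using x(2) y(2) by (rule null_vecs_lin_comb)
  moreover have "vscale tt (v - tau_coeffs x) + vscale (1 - tt) (w - tau_coeffs y) =
      vscale tt v + vscale (1 - tt) w - tau_coeffs (qop D x y)"
    by (simp add: tau_coeffs_qop[OF x(3) y(3)] fun_eq_iff vscale_def algebra_simps)
  ultimately show ?thesis
    using QA.op[OF x(1) y(1)] by (auto intro: QA_vecsI)
qed

text \<open>The element \<open>z = t\<^sub>j\<^sup>-\<^sup>1 (x + (t\<^sub>i - 1) y)\<close> satisfies \<open>z \<triangleright> y = x\<close>, so it
  represents \<open>x \<triangleright>\<^sup>-\<^sup>1 y\<close>.\<close>

lemma QA_vecs_qop_inv:
  assumes "v \<in> QA_vecs" "w \<in> QA_vecs"
  shows "vscale tt_inv v + vscale (1 - tt_inv) w \<in> QA_vecs"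
proof -
  obtain x i where x: "x \<in> QA D" "v - tau_coeffs x \<in> null_vecs" "phiL D x = tvar i - 1"
    using assms(1) by (rule QA_vecsE)
  obtain y j where y: "y \<in> QA D" "w - tau_coeffs y \<in> null_vecs" "phiL D y = tvar j - 1"
    using assms(2) by (rule QA_vecsE)
  define z where "z = smul (tvar_inv j) (x + smul (tvar i - 1) y)"
  have inv_j: "tvar_inv j * tvar j = 1" "tvar j * tvar_inv j = 1"
    using tvar_tvar_inv[of j] by (simp_all add: mult.commute)
  have phiL_z: "phiL D z = tvar i - 1"
  proof -
    have "phiL D z = tvar_inv j * ((tvar i - 1) * tvar j)"
      by (simp add: z_def phiL_smul phiL_add x(3) y(3) algebra_simps)
    then show ?thesis
      by (simp add: mult.left_commute[of "tvar_inv j"] inv_j)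
  qed
  have "z \<in> UL D"
    using phiL_z tvar_tvar_inv[of i] QA_subset_free_mod[OF x(1)] QA_subset_free_mod[OF y(1)]
    by (auto simp: UL_def z_def intro: free_mod_smul free_mod_add)
  moreover have "qop D z y = x"
    unfolding qop_def phiL_z y(3)
    by (simp add: fun_eq_iff z_def smul_def mult.assoc[symmetric] inv_j)
  ultimately have z: "z \<in> QA D"
    using QA.inv[OF x(1) y(1)] by (simp add: mcong_def zero_in_im_rho)
  have "vscale tt_inv (v - tau_coeffs x) + vscale (1 - tt_inv) (w - tau_coeffs y) \<in> null_vecs"
    using x(2) y(2) by (rule null_vecs_lin_comb)
  moreover have "vscale tt_inv (v - tau_coeffs x) + vscale (1 - tt_inv) (w - tau_coeffs y) =
      vscale tt_inv v + vscale (1 - tt_inv) w - tau_coeffs z"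
  proof -
    have "tt_inv * (tt - 1) = 1 - tt_inv"
      by (simp add: algebra_simps tt_tt_inv)
    then show ?thesis
      by (simp add: fun_eq_iff z_def tau_coeffs_def smul_def vscale_def tau_mult tau_add tau_diff
          algebra_simps)
  qed
  ultimately show ?thesis
    using z by (auto intro: QA_vecsI)
qed

lemma vscale_zero_left [simp]: "vscale (0 :: 'r::mult_zero) v = 0"
  by (simp add: vscale_def fun_eq_iff)

lemma null_vecs_subset_QA_translations: "z \<in> null_vecs \<Longrightarrow> z \<in> QA_translations"
  unfolding QA_translations_def QA_vecs_def
  using null_vecs_add by (fastforce simp: algebra_simps)

lemma QA_vecs_add_translation: "v \<in> QA_vecs \<Longrightarrow> h \<in> QA_translations \<Longrightarrow> v + h \<in> QA_vecs"
  by (simp add: QA_translations_def)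

lemma zero_in_QA_translations: "0 \<in> QA_translations"
  by (simp add: QA_translations_def)

lemma QA_translations_add: "h \<in> QA_translations \<Longrightarrow> h' \<in> QA_translations \<Longrightarrow> h + h' \<in> QA_translations"
  unfolding QA_translations_def by (simp add: add.assoc[symmetric])

lemma QA_translations_sum:
  "finite I \<Longrightarrow> (\<And>i. i \<in> I \<Longrightarrow> g i \<in> QA_translations) \<Longrightarrow> (\<Sum>i\<in>I. g i) \<in> QA_translations"
  by (induction I rule: finite_induct) (simp_all add: zero_in_QA_translations QA_translations_add)

lemma QA_vecs_shift:
  assumes "u \<in> QA_vecs" "u' \<in> QA_vecs"
  shows "vscale (1 - tt) (u - u') \<in> QA_translations"
  unfolding QA_translations_def
proof (intro CollectI ballI)
  fix v assume "v \<in> QA_vecs"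
  then have "vscale tt (vscale tt_inv v + vscale (1 - tt_inv) u') + vscale (1 - tt) u \<in> QA_vecs"
    using assms by (intro QA_vecs_qop QA_vecs_qop_inv)
  moreover have "vscale tt (vscale tt_inv v + vscale (1 - tt_inv) u') + vscale (1 - tt) u =
      v + vscale (1 - tt) (u - u')"
    by (simp add: fun_eq_iff vscale_def algebra_simps mult.assoc[symmetric] tt_tt_inv)
  ultimately show "v + vscale (1 - tt) (u - u') \<in> QA_vecs"
    by (simp only:)
qed

lemma QA_vecs_monomial_combination:
  assumes "u \<in> QA_vecs" "u' \<in> QA_vecs"
  shows "u' + vscale (Poly_Mapping.single k 1) (u - u') \<in> QA_vecs"
proof (rule int_induct[where k = 0 and P = "\<lambda>k. u' + vscale (Poly_Mapping.single k 1) (u - u') \<in> QA_vecs"])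
  have "u' + vscale (Poly_Mapping.single 0 1) (u - u') = u"
    by (simp add: fun_eq_iff vscale_def)
  then show "u' + vscale (Poly_Mapping.single 0 1) (u - u') \<in> QA_vecs"
    using assms(1) by simp
next
  fix i assume "u' + vscale (Poly_Mapping.single i 1) (u - u') \<in> QA_vecs"
  from QA_vecs_qop[OF this assms(2)]
  have "vscale tt (u' + vscale (Poly_Mapping.single i 1) (u - u')) + vscale (1 - tt) u' \<in> QA_vecs" .
  moreover have "vscale tt (u' + vscale (Poly_Mapping.single i 1) (u - u')) + vscale (1 - tt) u' =
      u' + vscale (Poly_Mapping.single (i + 1) 1) (u - u')"
    by (simp add: fun_eq_iff vscale_def algebra_simps mult.assoc[symmetric] mult_single)
  ultimately show "u' + vscale (Poly_Mapping.single (i + 1) 1) (u - u') \<in> QA_vecs"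
    by (simp only:)
next
  fix i assume "u' + vscale (Poly_Mapping.single i 1) (u - u') \<in> QA_vecs"
  from QA_vecs_qop_inv[OF this assms(2)]
  have "vscale tt_inv (u' + vscale (Poly_Mapping.single i 1) (u - u')) + vscale (1 - tt_inv) u'
      \<in> QA_vecs" .
  moreover have "vscale tt_inv (u' + vscale (Poly_Mapping.single i 1) (u - u')) + vscale (1 - tt_inv) u' =
      u' + vscale (Poly_Mapping.single (i - 1) 1) (u - u')"
    by (simp add: fun_eq_iff vscale_def algebra_simps mult.assoc[symmetric] mult_single)
  ultimately show "u' + vscale (Poly_Mapping.single (i - 1) 1) (u - u') \<in> QA_vecs"
    by (simp only:)
qed

lemma QA_vecs_affine_translation:
  "u \<in> QA_vecs \<Longrightarrow> u' \<in> QA_vecs \<Longrightarrow> vscale ((1 - tt) * p) (u - u') \<in> QA_translations"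
proof (induction p arbitrary: u u' rule: frag_induction[OF subset_UNIV])
  case 1
  show ?case using zero_in_QA_translations by (simp add: zero_fun_def)
next
  case (2 k)
  have "vscale (1 - tt) (u' + vscale (frag_of k) (u - u') - u') \<in> QA_translations"
    using 2 by (intro QA_vecs_shift QA_vecs_monomial_combination)
  moreover have "vscale (1 - tt) (u' + vscale (frag_of k) (u - u') - u') =
      vscale ((1 - tt) * frag_of k) (u - u')"
    by (simp add: fun_eq_iff vscale_def mult.assoc)
  ultimately show ?case by (simp only:)
next
  case (3 a b)
  have "vscale ((1 - tt) * a) (u - u') + vscale ((1 - tt) * b) (u' - u) \<in> QA_translations"
    using 3 by (intro QA_translations_add) (simp_all add: fun_diff_def)
  moreover have "vscale ((1 - tt) * a) (u - u') + vscale ((1 - tt) * b) (u' - u) =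
      vscale ((1 - tt) * (a - b)) (u - u')"
    by (simp add: fun_eq_iff vscale_def algebra_simps)
  ultimately show ?case by (simp only:)
qed

end

lemma vscale_diff_right: "vscale (p::'r::ring) (u - w) = vscale p u - vscale p w"
  by (simp add: vscale_def fun_eq_iff algebra_simps)

lemma vscale_sum_left: "vscale (\<Sum>i\<in>I. f i :: 'r::semiring_0) u = (\<Sum>i\<in>I. vscale (f i) u)"
  by (simp add: vscale_def fun_eq_iff sum_apply sum_distrib_right)

lemma vscale_one [simp]: "vscale (1::'r::monoid_mult) u = u"
  by (simp add: vscale_def)

context oriented_link
begin

definition linked :: "'e set + nat \<Rightarrow> 'e set + nat \<Rightarrow> bool" where
  "linked a a' \<longleftrightarrow> (\<forall>p. vscale p (tau_coeffs (basis a) - tau_coeffs (basis a')) \<in> QA_translations)"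

lemma linked_refl: "linked a a"
  by (simp add: linked_def zero_in_QA_translations vscale_def zero_fun_def[symmetric])

lemma linked_sym: "linked a a' \<Longrightarrow> linked a' a"
  unfolding linked_def
proof
  fix p assume "\<forall>p. vscale p (tau_coeffs (basis a) - tau_coeffs (basis a')) \<in> QA_translations"
  then have "vscale (- p) (tau_coeffs (basis a) - tau_coeffs (basis a')) \<in> QA_translations" ..
  moreover have "vscale (- p) (tau_coeffs (basis a) - tau_coeffs (basis a')) =
      vscale p (tau_coeffs (basis a') - tau_coeffs (basis a))"
    by (simp add: vscale_def fun_eq_iff algebra_simps)
  ultimately show "vscale p (tau_coeffs (basis a') - tau_coeffs (basis a)) \<in> QA_translations"
    by (simp only:)
qed

lemma linked_trans: "linked a a' \<Longrightarrow> linked a' a'' \<Longrightarrow> linked a a''"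
  unfolding linked_def
proof
  fix p assume "\<forall>p. vscale p (tau_coeffs (basis a) - tau_coeffs (basis a')) \<in> QA_translations"
    and "\<forall>p. vscale p (tau_coeffs (basis a') - tau_coeffs (basis a'')) \<in> QA_translations"
  then have "vscale p (tau_coeffs (basis a) - tau_coeffs (basis a')) +
      vscale p (tau_coeffs (basis a') - tau_coeffs (basis a'')) \<in> QA_translations"
    by (intro QA_translations_add) auto
  then show "vscale p (tau_coeffs (basis a) - tau_coeffs (basis a'')) \<in> QA_translations"
    by (simp add: vscale_diff_right)
qed

lemma tau_coeffs_rho_in_null_vecs:
  assumes "c \<in> crs D"
  shows "tau_coeffs (rho D c) \<in> null_vecs"
  using tens_rels_diff[OF tens_rels.ker[OF rho_in_im_rho[OF assms], of 1]
      gpair_one_equiv_arc_tensor[OF rho_in_free_mod[OF assms]]]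
  by (simp add: null_vecs_def)

lemma tau_coeffs_basis: "tau_coeffs (basis a) = (\<lambda>b. if b = a then 1 else 0)"
  by (simp add: fun_eq_iff tau_coeffs_def basis_def)

lemma tau_coeffs_rho:
  "tau_coeffs (rho D c) = vscale (1 - tt) (tau_coeffs (basis (a1 D c)))
    + vscale tt (tau_coeffs (basis (a2 D c))) - tau_coeffs (basis (a3 D c))"
  by (simp add: fun_eq_iff rho_def tau_coeffs_def smul_def vscale_def tau_diff tau_add tau_mult)

text \<open>At a crossing \<open>a\<^sub>3 - a\<^sub>2 = (1 - t)(a\<^sub>1 - a\<^sub>2) - \<rho>(c)\<close> after reduction.\<close>

lemma linked_crossing:
  assumes c: "c \<in> crs D"
  shows "linked (a3 D c) (a2 D c)"
  unfolding linked_def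
proof
  fix p
  let ?e = "\<lambda>a. tau_coeffs (basis a)"
  have "vscale (- p) (tau_coeffs (rho D c)) + vscale ((1 - tt) * p) (?e (a1 D c) - ?e (a2 D c))
      \<in> QA_translations"
    using c by (intro QA_translations_add null_vecs_subset_QA_translations null_vecs_vscale
        tau_coeffs_rho_in_null_vecs QA_vecs_affine_translation tau_coeffs_basis_in_QA_vecs
        crossing_arcs_in_arcs)
  moreover have "vscale (- p) (tau_coeffs (rho D c)) + vscale ((1 - tt) * p) (?e (a1 D c) - ?e (a2 D c))
      = vscale p (?e (a3 D c) - ?e (a2 D c))"
    by (simp add: tau_coeffs_rho vscale_def fun_eq_iff algebra_simps)
  ultimately show "vscale p (?e (a3 D c) - ?e (a2 D c)) \<in> QA_translations"
    by (simp only:)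
qed

lemma linked_strand: "(e, e') \<in> (strand_rel D)\<^sup>* \<Longrightarrow> linked (arc_of D e) (arc_of D e')"
proof (induction rule: rtrancl_induct)
  case base
  show ?case by (rule linked_refl)
next
  case (step y z)
  from step(2) obtain c where c: "c \<in> crs D"
    and "(y = inov D c \<and> z = outov D c) \<or> (y = inun D c \<and> z = outun D c)"
    unfolding strand_rel_def by blast
  then consider "(y, z) \<in> arc_rel D" | "y = inun D c" "z = outun D c"
    by (auto simp: arc_rel_def)
  then have "linked (arc_of D y) (arc_of D z)"
  proof cases
    case 1
    then show ?thesis by (simp add: arc_of_eq linked_refl)
  next
    case 2
    then show ?thesis
      using linked_crossing[OF c] linked_sym[OF linked_crossing[OF c]]
      by (cases "pos D c") (simp_all add: a2_def a3_def)
  qed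
  then show ?case
    using step.IH linked_trans by blast
qed

lemma linked_same_component:
  assumes a: "a \<in> arcs D" and a': "a' \<in> arcs D" and same: "kappa D a = kappa D a'"
  shows "linked a a'"
proof -
  have strands: "\<forall>e \<in> edg D. \<forall>e' \<in> edg D. labE D e = labE D e' \<longrightarrow> (e, e') \<in> (strand_rel D)\<^sup>*"
    and loops_inj: "inj_on (labL D) {..<nloops D}"
    and loops_disjoint: "labL D ` {..<nloops D} \<inter> labE D ` edg D = {}"
    using link_diagram by (simp_all add: link_diagram_def)
  consider (edges) e e' where "e \<in> edg D" "e' \<in> edg D" "a = arc_of D e" "a' = arc_of D e'"
    | (edge_loop) e k where "e \<in> edg D" "k < nloops D" "{a, a'} = {arc_of D e, Inr k}"
    | (loops) k k' where "k < nloops D" "k' < nloops D" "a = Inr k" "a' = Inr k'"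
    using a a' unfolding arcs_def by blast
  then show ?thesis
  proof cases
    case edges
    then show ?thesis
      using strands same linked_strand by (simp add: kappa_arc_of)
  next
    case edge_loop
    then have "labE D e = labL D k"
      using same by (auto simp: kappa_arc_of kappa_Inr doubleton_eq_iff)
    then show ?thesis
      using loops_disjoint edge_loop(1,2) by blast
  next
    case loops
    then have "k = k'"
      using loops_inj same by (auto simp: kappa_Inr inj_on_def)
    then show ?thesis
      using loops linked_refl by simp
  qed
qed

lemma component_has_arc: "\<exists>a\<in>arcs D. kappa D a = j"
proof -
  have "j \<in> labE D ` edg D \<union> labL D ` {..<nloops D}"
    using link_diagram by (simp add: link_diagram_def)
  then show ?thesis
  proof
    assume "j \<in> labE D ` edg D"
    then obtain e where "e \<in> edg D" "j = labE D e" by blast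
    then show ?thesis
      by (intro bexI[of _ "arc_of D e"]) (simp_all add: kappa_arc_of arcs_def)
  next
    assume "j \<in> labL D ` {..<nloops D}"
    then obtain k where "k < nloops D" "j = labL D k" by blast
    then show ?thesis
      by (intro bexI[of _ "Inr k"]) (simp_all add: kappa_Inr arcs_def)
  qed
qed

text \<open>The vector differs from an arc of component \<open>i\<close> by multiples of differences of arcs
  on a common component, and by \<open>(1 - t)\<close>-multiples of differences of arbitrary arcs.\<close>

lemma QA_vecs_if_invariants:
  assumes sum_one: "(\<Sum>a\<in>arcs D. v a) = 1"
    and component_sums:
      "\<And>j. (\<Sum>a\<in>{a \<in> arcs D. kappa D a = j}. augmentation (v a)) = (if j = i then 1 else 0)"
  shows "v \<in> QA_vecs"
proof -
  define e where "e a = tau_coeffs (basis a)" for a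
  define r where "r j = (SOME a. a \<in> arcs D \<and> kappa D a = j)" for j
  have r: "r j \<in> arcs D" "kappa D (r j) = j" for j
    using someI_ex[OF component_has_arc[of j, unfolded Bex_def]] by (simp_all add: r_def)
  define s where "s j = (\<Sum>a\<in>{a \<in> arcs D. kappa D a = j}. v a)" for j
  have sum_s: "(\<Sum>j\<in>UNIV. s j) = 1"
    unfolding s_def using sum.group[OF finite_arcs finite_UNIV subset_UNIV, of v] sum_one by simp
  define h1 where "h1 = v - (\<Sum>a\<in>arcs D. vscale (v a) (e a))"
  define h2 where "h2 = (\<Sum>a\<in>arcs D. vscale (v a) (e a - e (r (kappa D a))))"
  define h3 where "h3 = (\<Sum>j\<in>UNIV. vscale (s j) (e (r j) - e (r i)))"
  have "h1 \<in> QA_translations"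
    unfolding h1_def e_def
    by (intro null_vecs_subset_QA_translations null_vecs_if_zero_on_arcs)
       (simp add: sum_apply vscale_def tau_coeffs_basis finite_arcs)
  moreover have "h2 \<in> QA_translations"
    unfolding h2_def e_def
    using linked_same_component r unfolding linked_def
    by (intro QA_translations_sum finite_arcs) auto
  moreover have "h3 \<in> QA_translations"
    unfolding h3_def
  proof (intro QA_translations_sum finite_UNIV)
    fix j
    show "vscale (s j) (e (r j) - e (r i)) \<in> QA_translations"
    proof (cases "j = i")
      case True
      then show ?thesis
        using zero_in_QA_translations by (simp add: vscale_def zero_fun_def)
    next
      case False
      have "augmentation (s j) = 0"
        using component_sums[of j] False finite_arcs by (simp add: s_def augmentation_sum)
      then obtain q where "s j = (1 - tt) * q"
        by (rule dvdE[OF one_minus_tt_dvd])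
      then show ?thesis
        unfolding e_def using r by (simp add: QA_vecs_affine_translation tau_coeffs_basis_in_QA_vecs)
    qed
  qed
  ultimately have "e (r i) + (h1 + h2 + h3) \<in> QA_vecs"
    unfolding e_def
    by (intro QA_vecs_add_translation QA_translations_add tau_coeffs_basis_in_QA_vecs r(1))
  moreover have "e (r i) + (h1 + h2 + h3) = v"
  proof -
    have "(\<Sum>j\<in>UNIV. vscale (s j) (e (r j))) =
        (\<Sum>j\<in>UNIV. \<Sum>a\<in>{a \<in> arcs D. kappa D a = j}. vscale (v a) (e (r (kappa D a))))"
      unfolding s_def vscale_sum_left by (intro sum.cong refl) auto
    also have "\<dots> = (\<Sum>a\<in>arcs D. vscale (v a) (e (r (kappa D a))))"
      by (rule sum.group[OF finite_arcs finite_UNIV subset_UNIV])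
    finally have grouped: "(\<Sum>j\<in>UNIV. vscale (s j) (e (r j))) =
        (\<Sum>a\<in>arcs D. vscale (v a) (e (r (kappa D a))))" .
    have "(\<Sum>j\<in>UNIV. vscale (s j) (e (r i))) = e (r i)"
      using vscale_sum_left[of s UNIV "e (r i)"] sum_s by simp
    then have "h3 = (\<Sum>a\<in>arcs D. vscale (v a) (e (r (kappa D a)))) - e (r i)"
      by (simp add: h3_def vscale_diff_right sum_subtractf grouped)
    moreover have "h2 = (\<Sum>a\<in>arcs D. vscale (v a) (e a))
        - (\<Sum>a\<in>arcs D. vscale (v a) (e (r (kappa D a))))"
      by (simp add: h2_def vscale_diff_right sum_subtractf)
    ultimately show ?thesis
      by (simp add: h1_def)
  qed
  ultimately show ?thesis by simp
qed

end

section \<open>Invariants detected by \<open>\<phi>\<^sub>\<tau>\<close>\<close>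

abbreviation Irels :: "(('m::finite lp \<times> lp1) \<Rightarrow>\<^sub>0 int) set" where
  "Irels \<equiv> tens_rels augmentation_ideal {0} (*)"

text \<open>Of the two functionals on \<open>I\<^sub>\<mu> \<otimes> \<Lambda>\<close> below, the second is balanced only because
  the augmentation vanishes on \<open>I\<^sub>\<mu>\<close>.\<close>

definition tau_pairing :: "'m::finite lp \<times> lp1 \<Rightarrow> lp1" where
  "tau_pairing = (\<lambda>(f, l). tau f * l)"

definition partial_pairing :: "'m \<Rightarrow> 'm lp \<times> lp1 \<Rightarrow> unit \<Rightarrow>\<^sub>0 int" where
  "partial_pairing j = (\<lambda>(f, l). Poly_Mapping.single () (partial_at_one j f * augmentation l))"

lemma tau_pairing_Irels: "g \<in> Irels \<Longrightarrow> frag_extend tau_pairing g = 0"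
  by (erule frag_extend_tens_rels_eq_0)
     (simp_all add: tau_pairing_def tau_add tau_mult algebra_simps)

lemma partial_pairing_Irels:
  fixes j :: "'m::finite"
  shows "g \<in> Irels \<Longrightarrow> frag_extend (partial_pairing j) g = 0"
  by (erule frag_extend_tens_rels_eq_0)
     (simp_all add: partial_pairing_def partial_at_one_add partial_at_one_mult augmentation_add
       augmentation_mult augmentation_tau augmentation_ideal_iff distrib_left distrib_right
       single_add mult_ac)

context oriented_link
begin

abbreviation phiL_pair :: "('e, 'm) fmod \<times> lp1 \<Rightarrow> ('m lp \<times> lp1) \<Rightarrow>\<^sub>0 int" where
  "phiL_pair \<equiv> \<lambda>(x, l). gpair (phiL D x) l"

lemma phiL_pair_Mrels: "f \<in> Mrels \<Longrightarrow> frag_extend phiL_pair f \<in> Irels"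
  by (erule frag_extend_tens_rels)
     (auto intro: tens_rels.intros phiL_in_augmentation_ideal
       simp: phiL_add phiL_smul phiL_im_rho)

lemma phiL_pair_chain: "frag_extend phiL_pair f \<in> tens_chains augmentation_ideal"
  unfolding tens_chains_def using keys_frag_extend[of phiL_pair f]
  by (force simp: gpair_def phiL_in_augmentation_ideal split: prod.splits)

lemma phiL_pair_arc_tensor:
  "frag_extend phiL_pair (arc_tensor v) = (\<Sum>a\<in>arcs D. gpair (tvar (kappa D a) - 1) (v a))"
  unfolding arc_tensor_def frag_extend_sum[OF finite_arcs]
  by (simp add: gpair_eq_frag_of phiL_basis)

lemma arc_tensor_invariants:
  assumes "frag_extend phiL_pair (arc_tensor v) - gpair (tvar i - 1) 1 \<in> Irels"
  shows "(\<Sum>a\<in>arcs D. v a) = 1"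
    and "(\<Sum>a\<in>{a \<in> arcs D. kappa D a = j}. augmentation (v a)) = (if j = i then 1 else 0)"
proof -
  have "frag_extend tau_pairing (frag_extend phiL_pair (arc_tensor v) - gpair (tvar i - 1) 1) = 0"
    using assms by (rule tau_pairing_Irels)
  then have "(tt - 1) * ((\<Sum>a\<in>arcs D. v a) - 1) = 0"
    unfolding frag_extend_diff phiL_pair_arc_tensor
    by (simp add: frag_extend_sum[OF finite_arcs] gpair_eq_frag_of tau_pairing_def tau_diff
        sum_distrib_left right_diff_distrib)
  then show "(\<Sum>a\<in>arcs D. v a) = 1"
    using tt_minus_one_neq_zero by simp
next
  have "frag_extend (partial_pairing j)
      (frag_extend phiL_pair (arc_tensor v) - gpair (tvar i - 1) 1) = 0"
    using assms by (rule partial_pairing_Irels)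
  then have "Poly_Mapping.lookup (frag_extend (partial_pairing j)
      (frag_extend phiL_pair (arc_tensor v) - gpair (tvar i - 1) 1)) () = 0"
    by simp
  then have "(\<Sum>a\<in>arcs D. if kappa D a = j then augmentation (v a) else 0) = (if i = j then 1 else 0)"
    unfolding frag_extend_diff phiL_pair_arc_tensor
    by (simp add: frag_extend_sum[OF finite_arcs]
        gpair_eq_frag_of partial_pairing_def lookup_minus lookup_sum partial_at_one_tvar)
  then show "(\<Sum>a\<in>{a \<in> arcs D. kappa D a = j}. augmentation (v a)) = (if j = i then 1 else 0)"
    by (simp add: sum.inter_filter[OF finite_arcs] eq_commute)
qed

lemma QA_tensor_in_preimage:
  assumes x: "x \<in> QA D"
  shows "ptens (free_mod D) (im_rho D) smul x 1 \<in> Mred D"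
    and "phi_tau D (ptens (free_mod D) (im_rho D) smul x 1) \<in> (\<lambda>i. ItensOne (tvar i - 1)) ` UNIV"
proof -
  let ?W = "ptens (free_mod D) (im_rho D) smul x 1"
  have chain: "gpair x 1 \<in> tens_chains (free_mod D)"
    using QA_subset_free_mod[OF x] by (rule gpair_in_tens_chains)
  then show "?W \<in> Mred D"
    unfolding Mred_def tensor_def ptens_def tcls_def by (rule quotientI)
  obtain i where i: "phiL D x = tvar i - 1"
    using phiL_QA[OF x] by blast
  define g where "g = (SOME g. g \<in> ?W)"
  have g: "g \<in> tens_chains (free_mod D)" "gpair x 1 - g \<in> Mrels"
    using some_in_tcls[OF chain] by (simp_all add: g_def ptens_def)
  have "gpair (tvar i - 1) 1 - frag_extend phiL_pair g \<in> Irels"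
    using phiL_pair_Mrels[OF g(2)] by (simp add: frag_extend_diff gpair_eq_frag_of i)
  moreover have "gpair (tvar i - 1) 1 \<in> tens_chains augmentation_ideal"
    by (rule gpair_in_tens_chains) (simp add: augmentation_ideal_iff augmentation_tvar)
  ultimately have "tcls augmentation_ideal {0} (*) (frag_extend phiL_pair g) = ItensOne (tvar i - 1)"
    unfolding ItensOne_def ptens_def by (intro tcls_eqI[symmetric] phiL_pair_chain)
  then show "phi_tau D ?W \<in> (\<lambda>i. ItensOne (tvar i - 1)) ` UNIV"
    unfolding phi_tau_def g_def by simp
qed

lemma preimage_in_QAred:
  assumes W: "W \<in> Mred D" and i: "phi_tau D W = ItensOne (tvar i - 1)"
  shows "W \<in> QAred D"
proof -
  obtain f where f: "f \<in> tens_chains (free_mod D)" and W_eq: "W = tcls (free_mod D) (im_rho D) smul f"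
    using W unfolding Mred_def tensor_def tcls_def by (auto elim: quotientE)
  obtain v where v: "f - arc_tensor v \<in> Mrels"
    using chain_equiv_arc_tensor[OF f] by blast
  define g where "g = (SOME g. g \<in> W)"
  have g: "f - g \<in> Mrels"
    using some_in_tcls[OF f] by (simp add: g_def W_eq)
  have "tcls augmentation_ideal {0} (*) (frag_extend phiL_pair g) =
      tcls augmentation_ideal {0} (*) (gpair (tvar i - 1) 1)"
    using i unfolding phi_tau_def g_def ItensOne_def ptens_def .
  then have "gpair (tvar i - 1) 1 - frag_extend phiL_pair g \<in> Irels"
    by (rule tcls_eqD[OF phiL_pair_chain])
  with phiL_pair_Mrels[OF g] phiL_pair_Mrels[OF v]
  have "frag_extend phiL_pair (arc_tensor v) - gpair (tvar i - 1) 1 \<in> Irels"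
    using tens_rels_diff[OF tens_rels_diff] by (fastforce simp: frag_extend_diff)
  then have "v \<in> QA_vecs"
    by (intro QA_vecs_if_invariants arc_tensor_invariants)
  then obtain x where x: "x \<in> QA D" "arc_tensor (v - tau_coeffs x) \<in> Mrels"
    unfolding QA_vecs_def null_vecs_def by blast
  have "f - gpair x 1 \<in> Mrels"
    using tens_rels_diff[OF tens_rels.plus[OF v tens_rels_diff[OF x(2) arc_tensor_diff[of v "tau_coeffs x"]]]
        gpair_one_equiv_arc_tensor[OF QA_subset_free_mod[OF x(1)]]]
    by (simp add: algebra_simps)
  then have "W = ptens (free_mod D) (im_rho D) smul x 1"
    unfolding W_eq ptens_def
    by (intro tcls_eqI f gpair_in_tens_chains QA_subset_free_mod[OF x(1)])
  then show ?thesis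
    unfolding QAred_def using x(1) by blast
qed

end

theorem proposition15:
  fixes D :: "('c, 'e, 'm::finite) diagram"
  assumes "link_diagram D"
  shows "QAred D = {W \<in> Mred D. phi_tau D W \<in> (\<lambda>i. ItensOne (tvar i - 1)) ` UNIV}"
proof -
  interpret oriented_link D
    using assms by unfold_locales
  show ?thesis
    using QA_tensor_in_preimage preimage_in_QAred by (auto simp: QAred_def)
qed

end
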